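(* Let $G$ be a finite group, $H\leq G$, $T$ a right transversal of $H$ in $G$ containing $1$, and $\chi$ a linear character of $H$. For $g\in G$ write $g=\mathsf{H}(g)\mathsf{T}(g)$ with $\mathsf{H}(g)\in H$, $\mathsf{T}(g)\in T$, and set $\chi_{\mathsf{H}}(g)=\chi(\mathsf{H}(g))$. Let $G$ act on $T\times T$ by $(s,t)\cdot g=(\mathsf{T}(sg),\mathsf{T}(tg))$. For $t\in T$, the orbit (orbital) $\mathcal{O}$ of $(1,t)$ is called orientable if for all $(u,v)\in\mathcal{O}$ and all $g,k\in Hu\cap t^{-1}Hv$ one has $\chi_{\mathsf{H}}(g)^{-1}\chi_{\mathsf{H}}(tg)=\chi_{\mathsf{H}}(k)^{-1}\chi_{\mathsf{H}}(tk)$. Then $\mathcal{O}$ is orientable if and only if $\chi(tht^{-1}h^{-1})=1$ for all $h\in H\cap t^{-1}Ht$.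
   Context: A right transversal $T$ to $H$ in $G$ is a set such that every $g\in G$ factorises uniquely as $g=ht$ with $h\in H$, $t\in T$. *)

theory Defs
  imports "HOL-Algebra.Coset" Complex_Main
begin

definition right_transversal :: "('a, 'b) monoid_scheme \<Rightarrow> 'a set \<Rightarrow> 'a set \<Rightarrow> bool" where
  "right_transversal G H T \<longleftrightarrow> T \<subseteq> carrier G \<and>
     (\<forall>g\<in>carrier G. \<exists>!p. fst p \<in> H \<and> snd p \<in> T \<and> g = fst p \<otimes>\<^bsub>G\<^esub> snd p)"

definition Hpart :: "('a, 'b) monoid_scheme \<Rightarrow> 'a set \<Rightarrow> 'a set \<Rightarrow> 'a \<Rightarrow> 'a" where
  "Hpart G H T g = fst (THE p. fst p \<in> H \<and> snd p \<in> T \<and> g = fst p \<otimes>\<^bsub>G\<^esub> snd p)"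

definition Tpart :: "('a, 'b) monoid_scheme \<Rightarrow> 'a set \<Rightarrow> 'a set \<Rightarrow> 'a \<Rightarrow> 'a" where
  "Tpart G H T g = snd (THE p. fst p \<in> H \<and> snd p \<in> T \<and> g = fst p \<otimes>\<^bsub>G\<^esub> snd p)"

definition linear_character :: "('a, 'b) monoid_scheme \<Rightarrow> 'a set \<Rightarrow> ('a \<Rightarrow> complex) \<Rightarrow> bool" where
  "linear_character G H \<chi> \<longleftrightarrow> (\<forall>h\<in>H. \<chi> h \<noteq> 0) \<and>
     (\<forall>h\<in>H. \<forall>k\<in>H. \<chi> (h \<otimes>\<^bsub>G\<^esub> k) = \<chi> h * \<chi> k)"

definition chiH :: "('a, 'b) monoid_scheme \<Rightarrow> 'a set \<Rightarrow> 'a set \<Rightarrow> ('a \<Rightarrow> complex) \<Rightarrow> 'a \<Rightarrow> complex" where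
  "chiH G H T \<chi> g = \<chi> (Hpart G H T g)"

definition orbital :: "('a, 'b) monoid_scheme \<Rightarrow> 'a set \<Rightarrow> 'a set \<Rightarrow> 'a \<Rightarrow> ('a \<times> 'a) set" where
  "orbital G H T t = {(Tpart G H T (\<one>\<^bsub>G\<^esub> \<otimes>\<^bsub>G\<^esub> g), Tpart G H T (t \<otimes>\<^bsub>G\<^esub> g)) | g. g \<in> carrier G}"

definition orientable :: "('a, 'b) monoid_scheme \<Rightarrow> 'a set \<Rightarrow> 'a set \<Rightarrow> ('a \<Rightarrow> complex) \<Rightarrow> 'a \<Rightarrow> bool" where
  "orientable G H T \<chi> t \<longleftrightarrow>
     (\<forall>(u, v) \<in> orbital G H T t.
        \<forall>g \<in> (H #>\<^bsub>G\<^esub> u) \<inter> (inv\<^bsub>G\<^esub> t <#\<^bsub>G\<^esub> (H #>\<^bsub>G\<^esub> v)).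
        \<forall>k \<in> (H #>\<^bsub>G\<^esub> u) \<inter> (inv\<^bsub>G\<^esub> t <#\<^bsub>G\<^esub> (H #>\<^bsub>G\<^esub> v)).
          inverse (chiH G H T \<chi> g) * chiH G H T \<chi> (t \<otimes>\<^bsub>G\<^esub> g) =
          inverse (chiH G H T \<chi> k) * chiH G H T \<chi> (t \<otimes>\<^bsub>G\<^esub> k))"

end

(*
  Write g = a u and t g = b v with a, b in H and u, v in T; then
  chi_H(g)^-1 chi_H(t g) = chi(a)^-1 chi(b).  Two elements g, k of H u \<inter> t^-1 H v
  differ by k = h g with h in H \<inter> t^-1 H t (indeed t h t^-1 = (t k)(t g)^-1 lies in H),
  and the ratio for k is chi(t h t^-1) chi(h)^-1 times the ratio for g.  So the orbital
  of (1, t) is orientable iff chi(t h t^-1) = chi(h) on H \<inter> t^-1 H t; for the forward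
  direction compare g = 1 with k = h at the base pair (1, t).
*)

theory Submission
  imports Defs
begin

locale group_subgroup = group G + subgroup H G for G (structure) and H

locale right_transversal_group = group_subgroup +
  fixes T
  assumes transversal: "right_transversal G H T"

locale subgroup_character = group_subgroup +
  fixes \<chi> :: "'a \<Rightarrow> complex"
  assumes character: "linear_character G H \<chi>"

locale transversal_character = right_transversal_group + subgroup_character

lemma (in group) mem_l_coset_inv_iff:
  assumes "x \<in> carrier G" "g \<in> carrier G" "S \<subseteq> carrier G"
  shows "g \<in> inv x <# S \<longleftrightarrow> x \<otimes> g \<in> S"
proof
  assume "g \<in> inv x <# S"
  then obtain s where "s \<in> S" "g = inv x \<otimes> s" unfolding l_coset_def by blast
  then show "x \<otimes> g \<in> S" using assms by (auto simp: m_assoc[symmetric])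
next
  assume "x \<otimes> g \<in> S"
  moreover have "g = inv x \<otimes> (x \<otimes> g)" using assms by (simp add: m_assoc[symmetric])
  ultimately show "g \<in> inv x <# S" unfolding l_coset_def by blast
qed

lemma (in group_subgroup) mem_conjugate_iff:
  assumes "t \<in> carrier G" "h \<in> carrier G"
  shows "h \<in> inv t <# (H #> t) \<longleftrightarrow> t \<otimes> h \<otimes> inv t \<in> H"
  using assms by (simp add: mem_l_coset_inv_iff r_coset_subset_G subset rcos_module is_group)

lemma (in group_subgroup) r_coset_mult_inv_closed:
  assumes "u \<in> carrier G" "x \<in> H #> u" "y \<in> H #> u"
  shows "x \<otimes> inv y \<in> H"
proof -
  obtain a b where "a \<in> H" "b \<in> H" "x = a \<otimes> u" "y = b \<otimes> u"
    using assms(2,3) unfolding r_coset_def by blast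
  then have "x \<otimes> inv y = a \<otimes> inv b"
    using assms(1) by (simp add: inv_mult_group m_assoc[symmetric] m_assoc[of a u])
  then show ?thesis using \<open>a \<in> H\<close> \<open>b \<in> H\<close> by simp
qed

lemma (in group_subgroup) common_cosets_conjugate_factor:
  assumes "t \<in> carrier G" "u \<in> carrier G" "v \<in> carrier G"
    and "g \<in> (H #> u) \<inter> (inv t <# (H #> v))" "k \<in> (H #> u) \<inter> (inv t <# (H #> v))"
  shows "k \<otimes> inv g \<in> H" "t \<otimes> (k \<otimes> inv g) \<otimes> inv t \<in> H"
proof -
  have carrier: "g \<in> carrier G" "k \<in> carrier G"
    using assms r_coset_subset_G[OF subset] by auto
  have "t \<otimes> k \<in> H #> v" "t \<otimes> g \<in> H #> v"
    using assms carrier by (simp_all add: mem_l_coset_inv_iff r_coset_subset_G subset)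
  then have "(t \<otimes> k) \<otimes> inv (t \<otimes> g) \<in> H"
    by (rule r_coset_mult_inv_closed[OF assms(3)])
  moreover have "(t \<otimes> k) \<otimes> inv (t \<otimes> g) = t \<otimes> (k \<otimes> inv g) \<otimes> inv t"
    using assms(1) carrier by (simp add: inv_mult_group m_assoc)
  ultimately show "t \<otimes> (k \<otimes> inv g) \<otimes> inv t \<in> H" by simp
  show "k \<otimes> inv g \<in> H" using assms(2,4,5) by (auto intro: r_coset_mult_inv_closed)
qed

lemma (in right_transversal_group) transversal_subset: "T \<subseteq> carrier G"
  using transversal unfolding right_transversal_def by blast

lemma (in right_transversal_group) Tpart_mem_transversal:
  assumes "g \<in> carrier G"
  shows "Tpart G H T g \<in> T"
proof -
  have "\<exists>!p. fst p \<in> H \<and> snd p \<in> T \<and> g = fst p \<otimes> snd p"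
    using transversal assms unfolding right_transversal_def by blast
  from theI'[OF this] show ?thesis unfolding Tpart_def by blast
qed

lemma (in right_transversal_group) Hpart_Tpart_mult_eq:
  assumes "a \<in> H" "s \<in> T"
  shows "Hpart G H T (a \<otimes> s) = a" "Tpart G H T (a \<otimes> s) = s"
proof -
  have "a \<otimes> s \<in> carrier G" using assms transversal_subset by auto
  then have "\<exists>!p. fst p \<in> H \<and> snd p \<in> T \<and> a \<otimes> s = fst p \<otimes> snd p"
    using transversal unfolding right_transversal_def by blast
  then have "(THE p. fst p \<in> H \<and> snd p \<in> T \<and> a \<otimes> s = fst p \<otimes> snd p) = (a, s)"
    by (rule the1_equality) (simp add: assms)
  then show "Hpart G H T (a \<otimes> s) = a" "Tpart G H T (a \<otimes> s) = s"
    unfolding Hpart_def Tpart_def by simp_all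
qed

lemma (in right_transversal_group) orbital_subset:
  assumes "t \<in> carrier G"
  shows "orbital G H T t \<subseteq> T \<times> T"
  using assms Tpart_mem_transversal unfolding orbital_def by auto

lemma (in right_transversal_group) base_pair_mem_orbital:
  assumes "\<one> \<in> T" "t \<in> T"
  shows "(\<one>, t) \<in> orbital G H T t"
proof -
  have "Tpart G H T (\<one> \<otimes> \<one>) = \<one>"
    using Hpart_Tpart_mult_eq(2)[OF one_closed assms(1)] .
  moreover have "Tpart G H T (t \<otimes> \<one>) = t"
    using Hpart_Tpart_mult_eq(2)[OF one_closed assms(2)] assms(2) transversal_subset
    by auto
  ultimately show ?thesis unfolding orbital_def by (intro CollectI exI[of _ \<one>]) simp
qed

lemma (in subgroup_character) character_mult:
  "h \<in> H \<Longrightarrow> k \<in> H \<Longrightarrow> \<chi> (h \<otimes> k) = \<chi> h * \<chi> k"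
  using character unfolding linear_character_def by blast

lemma (in subgroup_character) character_nonzero: "h \<in> H \<Longrightarrow> \<chi> h \<noteq> 0"
  using character unfolding linear_character_def by blast

lemma (in subgroup_character) character_one: "\<chi> \<one> = 1"
proof -
  have "\<chi> \<one> = \<chi> \<one> * \<chi> \<one>" using character_mult[OF one_closed one_closed] by simp
  then show ?thesis using character_nonzero[OF one_closed] by simp
qed

lemma (in subgroup_character) character_inv:
  assumes "h \<in> H"
  shows "\<chi> (inv h) = inverse (\<chi> h)"
proof -
  have "\<chi> h * \<chi> (inv h) = 1"
    using character_mult[OF assms m_inv_closed[OF assms]] assms character_one by simp
  then show ?thesis by (rule inverse_unique[symmetric])
qed

lemma (in subgroup_character) character_mult_inv_eq_one_iff:
  assumes "h \<in> H" "c \<in> H"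
  shows "\<chi> (c \<otimes> inv h) = 1 \<longleftrightarrow> \<chi> c = \<chi> h"
  using assms character_nonzero[OF assms(1)]
  by (simp add: character_mult character_inv field_simps)

definition orientation_ratio ::
    "('a, 'b) monoid_scheme \<Rightarrow> 'a set \<Rightarrow> 'a set \<Rightarrow> ('a \<Rightarrow> complex) \<Rightarrow> 'a \<Rightarrow> 'a \<Rightarrow> complex"
  where "orientation_ratio G H T \<chi> t g =
    inverse (chiH G H T \<chi> g) * chiH G H T \<chi> (t \<otimes>\<^bsub>G\<^esub> g)"

lemma orientable_iff_orientation_ratio_eq:
  "orientable G H T \<chi> t \<longleftrightarrow>
     (\<forall>(u, v) \<in> orbital G H T t.
        \<forall>g \<in> (H #>\<^bsub>G\<^esub> u) \<inter> (inv\<^bsub>G\<^esub> t <#\<^bsub>G\<^esub> (H #>\<^bsub>G\<^esub> v)).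
        \<forall>k \<in> (H #>\<^bsub>G\<^esub> u) \<inter> (inv\<^bsub>G\<^esub> t <#\<^bsub>G\<^esub> (H #>\<^bsub>G\<^esub> v)).
          orientation_ratio G H T \<chi> t g = orientation_ratio G H T \<chi> t k)"
  unfolding orientable_def orientation_ratio_def ..

lemma (in transversal_character) chiH_mult_transversal:
  "a \<in> H \<Longrightarrow> s \<in> T \<Longrightarrow> chiH G H T \<chi> (a \<otimes> s) = \<chi> a"
  unfolding chiH_def by (simp add: Hpart_Tpart_mult_eq)

lemma (in transversal_character) orientation_ratio_mult_conjugate:
  assumes "t \<in> carrier G" "u \<in> T" "v \<in> T" "g \<in> H #> u" "t \<otimes> g \<in> H #> v"
    and "h \<in> H" "t \<otimes> h \<otimes> inv t \<in> H"
  shows "orientation_ratio G H T \<chi> t (h \<otimes> g) =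
    \<chi> (t \<otimes> h \<otimes> inv t) * inverse (\<chi> h) * orientation_ratio G H T \<chi> t g"
proof -
  obtain a b where ab: "a \<in> H" "b \<in> H" "g = a \<otimes> u" "t \<otimes> g = b \<otimes> v"
    using assms(4,5) unfolding r_coset_def by blast
  define c where "c = t \<otimes> h \<otimes> inv t"
  have carrier: "a \<in> carrier G" "h \<in> carrier G" "u \<in> carrier G" "g \<in> carrier G"
    using ab assms transversal_subset by auto
  have "t \<otimes> (h \<otimes> g) = c \<otimes> (t \<otimes> g)"
    using carrier assms(1) by (simp add: c_def m_assoc inv_solve_left)
  then have "t \<otimes> (h \<otimes> g) = (c \<otimes> b) \<otimes> v"
    using ab carrier assms(1,3) transversal_subset by (auto simp: c_def m_assoc)
  moreover have "h \<otimes> g = (h \<otimes> a) \<otimes> u" using ab(3) carrier by (simp add: m_assoc)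
  ultimately have "orientation_ratio G H T \<chi> t (h \<otimes> g) = inverse (\<chi> h * \<chi> a) * (\<chi> c * \<chi> b)"
    using ab assms(2,3,6,7) unfolding orientation_ratio_def c_def
    by (simp add: chiH_mult_transversal character_mult)
  moreover have "orientation_ratio G H T \<chi> t g = inverse (\<chi> a) * \<chi> b"
    using ab assms(2,3) unfolding orientation_ratio_def by (simp add: chiH_mult_transversal)
  ultimately show ?thesis unfolding c_def by (simp add: field_simps)
qed

lemma (in transversal_character) orientation_ratio_one:
  assumes "\<one> \<in> T" "t \<in> T"
  shows "orientation_ratio G H T \<chi> t \<one> = 1"
proof -
  have "chiH G H T \<chi> \<one> = 1" "chiH G H T \<chi> t = 1"
    using chiH_mult_transversal[OF one_closed assms(1)] chiH_mult_transversal[OF one_closed assms(2)]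
      assms transversal_subset character_one by auto
  then show ?thesis using assms transversal_subset unfolding orientation_ratio_def by auto
qed

lemma (in transversal_character) orientable_iff_conjugation_invariant:
  assumes "\<one> \<in> T" "t \<in> T"
  shows "orientable G H T \<chi> t \<longleftrightarrow> (\<forall>h \<in> H. t \<otimes> h \<otimes> inv t \<in> H \<longrightarrow> \<chi> (t \<otimes> h \<otimes> inv t) = \<chi> h)"
proof -
  have t: "t \<in> carrier G" using assms(2) transversal_subset by auto
  show ?thesis
  proof
    assume "orientable G H T \<chi> t"
    note at_base_pair = bspec[OF this[unfolded orientable_iff_orientation_ratio_eq]
        base_pair_mem_orbital[OF assms], unfolded prod.case]
    show "\<forall>h \<in> H. t \<otimes> h \<otimes> inv t \<in> H \<longrightarrow> \<chi> (t \<otimes> h \<otimes> inv t) = \<chi> h"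
    proof (intro ballI impI)
      fix h assume h: "h \<in> H" "t \<otimes> h \<otimes> inv t \<in> H"
      have cosets: "\<one> \<in> H #> \<one>" "t \<otimes> \<one> \<in> H #> t"
        using t rcos_self[OF t subgroup_axioms] by (simp_all add: coset_mult_one subset)
      have "\<one> \<in> (H #> \<one>) \<inter> (inv t <# (H #> t))" "h \<in> (H #> \<one>) \<inter> (inv t <# (H #> t))"
        using h t by (auto simp: coset_mult_one subset mem_conjugate_iff)
      then have "orientation_ratio G H T \<chi> t \<one> = orientation_ratio G H T \<chi> t h"
        using at_base_pair by blast
      also have "\<dots> = orientation_ratio G H T \<chi> t (h \<otimes> \<one>)" using h(1) by simp
      also have "\<dots> = \<chi> (t \<otimes> h \<otimes> inv t) * inverse (\<chi> h) * orientation_ratio G H T \<chi> t \<one>"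
        using orientation_ratio_mult_conjugate[OF t assms(1,2) cosets h] .
      finally have "\<chi> (t \<otimes> h \<otimes> inv t) * inverse (\<chi> h) = 1"
        using orientation_ratio_one[OF assms] by simp
      then show "\<chi> (t \<otimes> h \<otimes> inv t) = \<chi> h"
        using character_nonzero[OF h(1)] by (simp add: field_simps)
    qed
  next
    assume invariant: "\<forall>h \<in> H. t \<otimes> h \<otimes> inv t \<in> H \<longrightarrow> \<chi> (t \<otimes> h \<otimes> inv t) = \<chi> h"
    have "orientation_ratio G H T \<chi> t g = orientation_ratio G H T \<chi> t k"
      if "(u, v) \<in> orbital G H T t"
        and g: "g \<in> (H #> u) \<inter> (inv t <# (H #> v))" and k: "k \<in> (H #> u) \<inter> (inv t <# (H #> v))"
      for u v g k
    proof -
      from that(1) have uv: "u \<in> T" "v \<in> T" using orbital_subset[OF t] by auto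
      then have carrier: "u \<in> carrier G" "v \<in> carrier G" "g \<in> carrier G"
        using g transversal_subset r_coset_subset_G[OF subset] by auto
      define h where "h = k \<otimes> inv g"
      have h: "h \<in> H" "t \<otimes> h \<otimes> inv t \<in> H"
        using common_cosets_conjugate_factor[OF t carrier(1,2) g k] unfolding h_def by auto
      have "k \<in> carrier G" using k carrier r_coset_subset_G[OF subset] by auto
      then have "k = h \<otimes> g" using carrier unfolding h_def by (simp add: m_assoc)
      moreover have "g \<in> H #> u" "t \<otimes> g \<in> H #> v"
        using g t carrier by (auto simp: mem_l_coset_inv_iff r_coset_subset_G subset)
      ultimately have "orientation_ratio G H T \<chi> t k =
          \<chi> (t \<otimes> h \<otimes> inv t) * inverse (\<chi> h) * orientation_ratio G H T \<chi> t g"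
        using orientation_ratio_mult_conjugate[OF t uv _ _ h] by simp
      also have "\<chi> (t \<otimes> h \<otimes> inv t) = \<chi> h" using invariant h by blast
      finally show "orientation_ratio G H T \<chi> t g = orientation_ratio G H T \<chi> t k"
        using character_nonzero[OF h(1)] by simp
    qed
    then show "orientable G H T \<chi> t" unfolding orientable_iff_orientation_ratio_eq by blast
  qed
qed

theorem proposition3p6:
  fixes G (structure) and H T :: "'a set" and \<chi> :: "'a \<Rightarrow> complex" and t :: 'a
  assumes "group G" and "finite (carrier G)" and "subgroup H G"
    and "right_transversal G H T" and "\<one>\<^bsub>G\<^esub> \<in> T"
    and "linear_character G H \<chi>"
    and "t \<in> T"
  shows "orientable G H T \<chi> t \<longleftrightarrow>
    (\<forall>h \<in> H \<inter> (inv\<^bsub>G\<^esub> t <#\<^bsub>G\<^esub> (H #>\<^bsub>G\<^esub> t)).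
       \<chi> (t \<otimes>\<^bsub>G\<^esub> h \<otimes>\<^bsub>G\<^esub> inv\<^bsub>G\<^esub> t \<otimes>\<^bsub>G\<^esub> inv\<^bsub>G\<^esub> h) = 1)"
proof -
  interpret group_subgroup G H using assms(1,3) by (rule group_subgroup.intro)
  interpret transversal_character G H T \<chi>
    by intro_locales (simp_all add: right_transversal_group_axioms_def
        subgroup_character_axioms_def assms(4,6))
  have t: "t \<in> carrier G" using assms(7) transversal_subset by auto
  have "(h \<in> inv t <# (H #> t) \<longrightarrow> \<chi> (t \<otimes> h \<otimes> inv t \<otimes> inv h) = 1) \<longleftrightarrow>
      (t \<otimes> h \<otimes> inv t \<in> H \<longrightarrow> \<chi> (t \<otimes> h \<otimes> inv t) = \<chi> h)" if "h \<in> H" for h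
    using that t by (simp add: mem_conjugate_iff character_mult_inv_eq_one_iff)
  then show ?thesis
    unfolding orientable_iff_conjugation_invariant[OF assms(5,7)] by blast
qed

end
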